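(* Let $(X,\wedge,\vee,\bot,\top)$ be a bounded distributive lattice, let $n\ge 1$, and let $x=(x_1,\ldots,x_n)$ be a sequence of elements of $X$ such that $x_i\le x_n$ for all $1\le i\le n-1$. For $0\le m\le n$ and $0\le k\le m+1$ define $$P_m(k)=\begin{cases}\bot & k=0,\\ \bigwedge_{I\subseteq\{1,\ldots,m\},\ |I|=k}\ \bigvee_{i\in I} x_i & 1\le k\le m,\\ \top & k=m+1.\end{cases}$$ Then $P_n(n)=x_n$, and $P_n(i)=P_{n-1}(i)$ for all $1\le i\le n-1$.
   Context: $\le$ is the partial order of the lattice $X$; $\bot$ and $\top$ are its least and greatest elements. For $1\le k\le m$, $P_m(k)$ is the $k$-th element of $(x_1,\ldots,x_m)$ sorted with respect to the lattice. *)

theory Defs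
  imports Main
begin

text \<open>Values for k > m+1 are not used
  (we set them to top as well).\<close>

definition P :: "(nat \<Rightarrow> 'a::{distrib_lattice, bounded_lattice}) \<Rightarrow> nat \<Rightarrow> nat \<Rightarrow> 'a" where
  "P x m k =
     (if k = 0 then bot
      else if k \<le> m then Inf_fin {Sup_fin (x ` I) | I. I \<subseteq> {1..m} \<and> card I = k}
      else top)"

end

theory Submission
  imports Defs
begin

text \<open>If \<open>x\<^sub>n\<close> dominates \<open>x\<^sub>1, \<dots>, x\<^sub>n\<^sub>-\<^sub>1\<close>, every join over a set containing \<open>n\<close> equals
  \<open>x\<^sub>n\<close>. Such joins cannot lower the meet, since \<open>x\<^sub>n\<close> already lies above the join over any
  \<open>k\<close>-subset of \<open>{1..n-1}\<close>; hence \<open>P\<^sub>n(k) = P\<^sub>n\<^sub>-\<^sub>1(k)\<close> for \<open>k < n\<close>. For \<open>k = n\<close> the only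
  \<open>n\<close>-subset is \<open>{1..n}\<close>, whose join is \<open>x\<^sub>n\<close>.\<close>

definition meet_of_joins :: "('i \<Rightarrow> 'a::lattice) \<Rightarrow> 'i set \<Rightarrow> nat \<Rightarrow> 'a" where
  "meet_of_joins x A k = Inf_fin {Sup_fin (x ` I) | I. I \<subseteq> A \<and> card I = k}"

lemma P_eq_meet_of_joins:
  "1 \<le> k \<Longrightarrow> k \<le> m \<Longrightarrow> P x m k = meet_of_joins x {1..m} k"
  by (simp add: P_def meet_of_joins_def)

lemma finite_joins_of_subsets:
  "finite A \<Longrightarrow> finite {Sup_fin (x ` I) | I. I \<subseteq> A \<and> card I = k}"
  by (rule finite_subset[where B = "(\<lambda>I. Sup_fin (x ` I)) ` Pow A"]) auto

lemma Sup_fin_image_eq_dominant: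
  fixes x :: "'i \<Rightarrow> 'a::lattice"
  assumes "finite J" "m \<in> J" "\<forall>j\<in>J. x j \<le> x m"
  shows "Sup_fin (x ` J) = x m"
proof (rule antisym)
  show "Sup_fin (x ` J) \<le> x m"
    using assms by (intro Sup_fin.boundedI) auto
  show "x m \<le> Sup_fin (x ` J)"
    using assms by (intro Sup_fin.coboundedI) auto
qed

lemma meet_of_joins_card:
  fixes x :: "'i \<Rightarrow> 'a::lattice"
  assumes "finite A"
  shows "meet_of_joins x A (card A) = Sup_fin (x ` A)"
proof -
  have "I \<subseteq> A \<and> card I = card A \<longleftrightarrow> I = A" for I
    using card_subset_eq[OF assms] by auto
  then show ?thesis
    by (simp add: meet_of_joins_def)
qed

lemma meet_of_joins_insert_dominant:
  fixes x :: "'i \<Rightarrow> 'a::lattice"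
  assumes A: "finite A" and dom: "\<forall>a\<in>A. x a \<le> x m"
    and k: "1 \<le> k" "k \<le> card A"
  shows "meet_of_joins x (insert m A) k = meet_of_joins x A k"
proof -
  define S where "S = {Sup_fin (x ` I) | I. I \<subseteq> insert m A \<and> card I = k}"
  define S' where "S' = {Sup_fin (x ` I) | I. I \<subseteq> A \<and> card I = k}"
  have fin: "finite S" "finite S'"
    unfolding S_def S'_def using A by (simp_all add: finite_joins_of_subsets)
  have "S' \<subseteq> S"
    unfolding S_def S'_def by blast
  obtain I0 where I0: "I0 \<subseteq> A" "card I0 = k"
    using obtain_subset_with_card_n[OF k(2)] by blast
  have I0_nonempty: "I0 \<noteq> {}"
    using I0(2) k(1) by auto
  have I0_in: "Sup_fin (x ` I0) \<in> S'"
    unfolding S'_def using I0 by blast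
  have I0_below: "Sup_fin (x ` I0) \<le> x m"
    using I0 I0_nonempty dom finite_subset[OF I0(1) A] by (intro Sup_fin.boundedI) auto
  have "Inf_fin S' \<le> a" if "a \<in> S" for a
  proof -
    obtain J where J: "J \<subseteq> insert m A" "card J = k" "a = Sup_fin (x ` J)"
      using \<open>a \<in> S\<close> unfolding S_def by blast
    show ?thesis
    proof (cases "m \<in> J")
      case True
      have "\<forall>j\<in>J. x j \<le> x m"
        using J(1) dom by auto
      then have "a = x m"
        using J True finite_subset[OF J(1)] A by (simp add: Sup_fin_image_eq_dominant)
      then show ?thesis
        using Inf_fin.coboundedI[OF fin(2) I0_in] I0_below by simp
    next
      case False
      then have "a \<in> S'"
        unfolding S'_def using J by blast
      then show ?thesis
        by (rule Inf_fin.coboundedI[OF fin(2)])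
    qed
  qed
  then have "Inf_fin S' \<le> Inf_fin S"
    using \<open>S' \<subseteq> S\<close> I0_in fin(1) by (intro Inf_fin.boundedI) auto
  moreover have "Inf_fin S \<le> Inf_fin S'"
    using \<open>S' \<subseteq> S\<close> I0_in fin by (intro Inf_fin.subset_imp) auto
  ultimately have "Inf_fin S = Inf_fin S'"
    by (rule antisym[rotated])
  then show ?thesis
    unfolding meet_of_joins_def S_def S'_def .
qed

theorem lemma3p3:
  fixes x :: "nat \<Rightarrow> 'a::{distrib_lattice, bounded_lattice}"
    and n :: nat
  assumes "n \<ge> 1"
    and "\<forall>i. 1 \<le> i \<and> i \<le> n - 1 \<longrightarrow> x i \<le> x n"
  shows "P x n n = x n \<and> (\<forall>i. 1 \<le> i \<and> i \<le> n - 1 \<longrightarrow> P x n i = P x (n - 1) i)"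
proof -
  have split: "{1..n} = insert n {1..n-1}"
    using assms(1) by auto
  have dom_init: "\<forall>j\<in>{1..n-1}. x j \<le> x n"
    using assms(2) by auto
  then have dom: "\<forall>j\<in>{1..n}. x j \<le> x n"
    unfolding split by simp
  have "P x n n = Sup_fin (x ` {1..n})"
    using assms(1) meet_of_joins_card[of "{1..n}" x] by (simp add: P_eq_meet_of_joins)
  also have "\<dots> = x n"
    using assms(1) dom by (intro Sup_fin_image_eq_dominant) auto
  finally have "P x n n = x n" .
  moreover have "P x n i = P x (n - 1) i" if "1 \<le> i" "i \<le> n - 1" for i
  proof -
    have "meet_of_joins x {1..n} i = meet_of_joins x {1..n-1} i"
      unfolding split using that dom_init by (intro meet_of_joins_insert_dominant) auto
    then show ?thesis
      using that by (simp add: P_eq_meet_of_joins)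
  qed
  ultimately show ?thesis
    by blast
qed

end
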